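(* Let $m,K$ be positive integers and $b_1,\dots,b_{3m}$ positive integers with $K/4<b_i<K/2$ and $\sum_i b_i=mK$. Set $W=100(5m)^2K$, $a_i=b_i+W$, $L=3W+K$, $\epsilon=1/(400(5m)^2)$, $h=\lfloor 4\epsilon L\rfloor$, $H=L+h$, $\beta_0=h/H$, $\beta_i=a_i/H-1/3$ ($1\le i\le 3m$). Let $X$ be the multiset consisting of $a_1,\dots,a_{3m}$, $m$ copies of $-H$ and $m$ copies of $h$, and let $T_{\min}$ be a minimum-cost addition tree over $X$. If $z$ is an internal node of $T_{\min}$ with $z<0$, then $z$ is of the form $\lambda H$ or $(-1/3+\lambda)H$.
   Context: An addition tree over a multiset $X$ is a full binary tree whose leaves are labeled by the elements of $X$ (each used once), each internal node having value equal to the sum of its children's values; its cost is the sum of the absolute values of its internal nodes, and $T_{\min}$ minimizes the cost. Nodes are identified with their values. A "$\lambda$" denotes a sum of at most $5m$ numbers each of the form $\pm\beta_i$ with $0\le i\le 3m$. Every node value can be written as $(N/3+\lambda)H$ with $N$ an integer; since $|\lambda|\le 1/(500m)$, $N$ and the value of $\lambda$ are uniquely determined. *)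

theory Defs
  imports Main "HOL-Library.Multiset" Complex_Main
begin

datatype atree = Leaf int | Node atree atree

fun aval :: "atree \<Rightarrow> int" where
  "aval (Leaf x) = x"
| "aval (Node l r) = aval l + aval r"

fun leaves :: "atree \<Rightarrow> int multiset" where
  "leaves (Leaf x) = {#x#}"
| "leaves (Node l r) = leaves l + leaves r"

fun cost :: "atree \<Rightarrow> int" where
  "cost (Leaf x) = 0"
| "cost (Node l r) = \<bar>aval l + aval r\<bar> + cost l + cost r"

text \<open>Values of the internal nodes (nodes identified with their values).\<close>
fun internal_vals :: "atree \<Rightarrow> int set" where
  "internal_vals (Leaf x) = {}"
| "internal_vals (Node l r) = insert (aval l + aval r) (internal_vals l \<union> internal_vals r)"

definition addition_tree_over :: "int multiset \<Rightarrow> atree \<Rightarrow> bool" where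
  "addition_tree_over X t \<longleftrightarrow> leaves t = X"

definition min_cost_tree :: "int multiset \<Rightarrow> atree \<Rightarrow> bool" where
  "min_cost_tree X t \<longleftrightarrow> addition_tree_over X t \<and>
     (\<forall>t'. addition_tree_over X t' \<longrightarrow> cost t \<le> cost t')"

definition is_lambda :: "nat \<Rightarrow> (nat \<Rightarrow> real) \<Rightarrow> real \<Rightarrow> bool" where
  "is_lambda m beta x \<longleftrightarrow> (\<exists>ts :: (real \<times> nat) list.
     length ts \<le> 5 * m \<and>
     (\<forall>(s, i) \<in> set ts. (s = 1 \<or> s = -1) \<and> i \<le> 3 * m) \<and>
     x = sum_list (map (\<lambda>(s, i). s * beta i) ts))"

end

theory Submission
  imports Defs
begin

text \<open>Give every leaf x an integer charge N with x close to N H/3: charge 1 for the a_i, -3 for -H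
and 0 for h. A node whose leaves have total charge N then has value (N/3 + lambda) H, where lambda
collects the offsets of its leaves. Up to an error far below H, three times the cost of a tree is H
times the sum of the absolute charges of its internal nodes, its charge cost. A potential argument
shows that twice the charge cost of any tree over X is at least the total absolute charge 6m, while
grouping the leaves into trees ((((a, a), -H), a), h) attains 3m. So T_min attains the bound,
and tightness forces every internal node of charge at most -2 to be a pair of a and -H whose
sibling is a leaf a; re-pairing the two a's lowers the cost. Hence every internal node has charge at
least -1, while a negative node has charge at most 0 because its value is within far less than H of
N H/3.\<close>

lemma aval_eq_sum_leaves: "aval t = sum_mset (leaves t)"
  by (induction t) auto

fun inner_nodes :: "atree \<Rightarrow> atree set" where
  "inner_nodes (Leaf x) = {}"
| "inner_nodes (Node l r) = insert (Node l r) (inner_nodes l \<union> inner_nodes r)"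

lemma internal_vals_eq_aval_image: "internal_vals t = aval ` inner_nodes t"
  by (induction t) auto

lemma leaves_inner_node_subset: "u \<in> inner_nodes t \<Longrightarrow> leaves u \<subseteq># leaves t"
  by (induction t) (auto intro: subset_mset.order_trans[OF _ mset_subset_eq_add_left]
                          subset_mset.order_trans[OF _ mset_subset_eq_add_right])

lemma min_cost_tree_Node_commute: "min_cost_tree X (Node l r) \<longleftrightarrow> min_cost_tree X (Node r l)"
  by (simp add: min_cost_tree_def addition_tree_over_def ac_simps)

lemma min_cost_tree_left:
  assumes "min_cost_tree X (Node l r)"
  shows "min_cost_tree (leaves l) l"
  unfolding min_cost_tree_def addition_tree_over_def
proof (intro conjI allI impI)
  fix l' assume l': "leaves l' = leaves l"
  then have "aval l' = aval l" by (simp add: aval_eq_sum_leaves)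
  moreover have "leaves (Node l' r) = X"
    using assms l' by (simp add: min_cost_tree_def addition_tree_over_def)
  then have "cost (Node l r) \<le> cost (Node l' r)"
    using assms unfolding min_cost_tree_def addition_tree_over_def by blast
  ultimately show "cost l \<le> cost l'" by simp
qed simp

lemma min_cost_tree_right: "min_cost_tree X (Node l r) \<Longrightarrow> min_cost_tree (leaves r) r"
  using min_cost_tree_left min_cost_tree_Node_commute by blast

definition charge :: "(int \<Rightarrow> int) \<Rightarrow> atree \<Rightarrow> int" where
  "charge w t = (\<Sum>x\<in>#leaves t. w x)"

lemma charge_Leaf [simp]: "charge w (Leaf x) = w x"
  and charge_Node [simp]: "charge w (Node l r) = charge w l + charge w r"
  by (simp_all add: charge_def)

fun charge_cost :: "(int \<Rightarrow> int) \<Rightarrow> atree \<Rightarrow> int" where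
  "charge_cost w (Leaf x) = 0"
| "charge_cost w (Node l r) = \<bar>charge w l + charge w r\<bar> + charge_cost w l + charge_cost w r"

text \<open>For a tree of total charge 0 the potential is its total weight. The deficit accounts for
the cheap nodes of charge -2, such as a pair of leaves of weights 1 and -3 (charge cost 2).\<close>

fun deficit :: "(int \<Rightarrow> int) \<Rightarrow> atree \<Rightarrow> int" where
  "deficit w (Leaf x) = \<bar>w x\<bar>"
| "deficit w (Node l r) = (if charge w l + charge w r = -2 then 1 else 0)"

definition potential :: "(int \<Rightarrow> int) \<Rightarrow> atree \<Rightarrow> int" where
  "potential w t = (\<Sum>x\<in>#leaves t. \<bar>w x\<bar>) + \<bar>charge w t\<bar> - 2 * deficit w t"

definition tight :: "(int \<Rightarrow> int) \<Rightarrow> atree \<Rightarrow> bool" where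
  "tight w t \<longleftrightarrow> 2 * charge_cost w t = potential w t"

definition slack :: "(int \<Rightarrow> int) \<Rightarrow> atree \<Rightarrow> atree \<Rightarrow> int" where
  "slack w l r = \<bar>charge w l + charge w r\<bar> + \<bar>charge w l\<bar> + \<bar>charge w r\<bar>
     + 2 * deficit w (Node l r) - 2 * deficit w l - 2 * deficit w r"

lemma potential_Leaf [simp]: "potential w (Leaf x) = 0"
  by (simp add: potential_def)

lemma charge_cost_potential_Node:
  "2 * charge_cost w (Node l r) - potential w (Node l r) =
     (2 * charge_cost w l - potential w l) + (2 * charge_cost w r - potential w r) + slack w l r"
  by (simp add: potential_def slack_def)

lemma slack_nonneg:
  assumes weights: "\<And>x. w x \<in> {1, -3, 0}"
  shows "0 \<le> slack w l r"
proof (cases l; cases r)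
  fix x y assume "l = Leaf x" "r = Leaf y"
  then show ?thesis using weights[of x] weights[of y] by (auto simp: slack_def)
next
  fix x r1 r2 assume "l = Leaf x" "r = Node r1 r2"
  then show ?thesis using weights[of x] by (auto simp: slack_def)
next
  fix l1 l2 y assume "l = Node l1 l2" "r = Leaf y"
  then show ?thesis using weights[of y] by (auto simp: slack_def)
next
  fix l1 l2 r1 r2 assume "l = Node l1 l2" "r = Node r1 r2"
  then show ?thesis by (auto simp: slack_def)
qed

lemma potential_le_charge_cost:
  assumes "\<And>x. w x \<in> {1, -3, 0}"
  shows "potential w t \<le> 2 * charge_cost w t"
proof (induction t)
  case (Node l r)
  then show ?case
    using charge_cost_potential_Node[of w l r] slack_nonneg[of w l r, OF assms] by linarith
qed simp

lemma tight_NodeD: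
  assumes "\<And>x. w x \<in> {1, -3, 0}" and "tight w (Node l r)"
  shows "tight w l" "tight w r" "slack w l r = 0"
  using assms(2) charge_cost_potential_Node[of w l r] slack_nonneg[of w l r, OF assms(1)]
    potential_le_charge_cost[of w l, OF assms(1)] potential_le_charge_cost[of w r, OF assms(1)]
  unfolding tight_def by linarith+

lemma tight_Node_commute: "tight w (Node l r) \<longleftrightarrow> tight w (Node r l)"
  by (simp add: tight_def potential_def add.commute)

lemma tight_heavy_child:
  assumes weights: "\<And>x. w x \<in> {1, -3, 0}"
    and tight: "tight w (Node l r)" and inner: "l = Node l1 l2" and heavy: "charge w l \<le> -2"
  obtains x y x' where "w x = 1" "w y = -3" "w x' = 1" "r = Leaf x'"
    "l = Node (Leaf x) (Leaf y) \<or> l = Node (Leaf y) (Leaf x)"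
proof -
  have "slack w l r = 0" and "tight w (Node l1 l2)"
    using tight_NodeD[OF weights tight] inner by auto
  then have "slack w l1 l2 = 0"
    using tight_NodeD(3)[of w l1 l2, OF weights] by blast
  have "charge w l = -2 \<and> (\<exists>x'. r = Leaf x' \<and> w x' = 1)"
  proof (cases r)
    case (Leaf y)
    then show ?thesis
      using \<open>slack w l r = 0\<close> inner heavy weights[of y]
      by (auto simp: slack_def split: if_splits)
  next
    case (Node r1 r2)
    then show ?thesis
      using \<open>slack w l r = 0\<close> inner heavy by (auto simp: slack_def split: if_splits)
  qed
  moreover have
    "\<exists>x y. w x = 1 \<and> w y = -3 \<and> (l = Node (Leaf x) (Leaf y) \<or> l = Node (Leaf y) (Leaf x))"
    if "charge w l = -2"
  proof (cases l1; cases l2)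
    fix x y assume "l1 = Leaf x" "l2 = Leaf y"
    then show ?thesis using that inner weights[of x] weights[of y] by auto
  next
    fix x r1 r2 assume "l1 = Leaf x" "l2 = Node r1 r2"
    then show ?thesis using that inner \<open>slack w l1 l2 = 0\<close> weights[of x]
      by (auto simp: slack_def split: if_splits)
  next
    fix l1' l2' y assume "l1 = Node l1' l2'" "l2 = Leaf y"
    then show ?thesis using that inner \<open>slack w l1 l2 = 0\<close> weights[of y]
      by (auto simp: slack_def split: if_splits)
  next
    fix l1' l2' r1 r2 assume "l1 = Node l1' l2'" "l2 = Node r1 r2"
    then show ?thesis using that inner \<open>slack w l1 l2 = 0\<close>
      by (auto simp: slack_def split: if_splits)
  qed
  ultimately show ?thesis using that by blast
qed

text \<open>The left tree costs H, the right one (H - x) + (H - x - x').\<close>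

lemma rotation_lowers_cost:
  assumes "0 < x" "0 < x'" "2 * x + x' < H"
    and "l = Node (Leaf x) (Leaf (-H)) \<or> l = Node (Leaf (-H)) (Leaf x)"
  shows "cost (Node (Node (Leaf x) (Leaf x')) (Leaf (-H))) < cost (Node l (Leaf x'))"
  using assms by auto

lemma tight_min_cost_child_charge_ge:
  assumes weights: "\<And>x. w x \<in> {1, -3, 0}" and minus_three: "\<And>x. w x = -3 \<Longrightarrow> x = -H"
    and ones: "\<forall>x\<in>#leaves (Node l r). w x = 1 \<longrightarrow> 0 < x \<and> 3 * x < H"
    and min: "min_cost_tree X (Node l r)" and tight: "tight w (Node l r)"
    and inner: "l = Node l1 l2"
  shows "-1 \<le> charge w l"
proof (rule ccontr)
  assume "\<not> -1 \<le> charge w l"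
  then have "charge w l \<le> -2" by simp
  then obtain x y x' where weights_xyx': "w x = 1" "w y = -3" "w x' = 1" and r: "r = Leaf x'"
    and l: "l = Node (Leaf x) (Leaf y) \<or> l = Node (Leaf y) (Leaf x)"
    by (rule tight_heavy_child[OF weights tight inner])
  have y: "y = -H" using minus_three weights_xyx'(2) .
  have "x \<in># leaves (Node l r)" "x' \<in># leaves (Node l r)" using l r by auto
  then have "0 < x" "3 * x < H" "0 < x'" "3 * x' < H"
    using ones weights_xyx' by auto
  then have cheaper: "cost (Node (Node (Leaf x) (Leaf x')) (Leaf (-H))) < cost (Node l r)"
    using rotation_lowers_cost l r y by simp
  have "leaves (Node (Node (Leaf x) (Leaf x')) (Leaf (-H))) = X"
    using min l r y by (auto simp: min_cost_tree_def addition_tree_over_def)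
  then have "cost (Node l r) \<le> cost (Node (Node (Leaf x) (Leaf x')) (Leaf (-H)))"
    using min unfolding min_cost_tree_def addition_tree_over_def by blast
  with cheaper show False by simp
qed

lemma tight_min_cost_inner_charge_ge:
  assumes weights: "\<And>x. w x \<in> {1, -3, 0}" and minus_three: "\<And>x. w x = -3 \<Longrightarrow> x = -H"
    and "\<forall>x\<in>#leaves t. w x = 1 \<longrightarrow> 0 < x \<and> 3 * x < H" and "min_cost_tree X t" and "tight w t"
    and "-1 \<le> charge w t" and "u \<in> inner_nodes t"
  shows "-1 \<le> charge w u"
  using assms(3-)
proof (induction t arbitrary: X u)
  case (Node l r)
  note ones = Node.prems(1) and min = Node.prems(2) and tight = Node.prems(3)
  consider "u = Node l r" | "u \<in> inner_nodes l" | "u \<in> inner_nodes r"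
    using Node.prems(5) by auto
  then show ?case
  proof cases
    case 1
    then show ?thesis using Node.prems(4) by simp
  next
    case 2
    then obtain l1 l2 where "l = Node l1 l2" by (cases l) auto
    then have "-1 \<le> charge w l"
      using tight_min_cost_child_charge_ge[OF weights minus_three ones min tight] by blast
    then show ?thesis
      using Node.IH(1) 2 ones min_cost_tree_left[OF min] tight_NodeD(1)[OF weights tight] by simp
  next
    case 3
    then obtain r1 r2 where "r = Node r1 r2" by (cases r) auto
    moreover have "\<forall>x\<in>#leaves (Node r l). w x = 1 \<longrightarrow> 0 < x \<and> 3 * x < H"
      using ones by auto
    ultimately have "-1 \<le> charge w r"
      using tight_min_cost_child_charge_ge[of w H r l X] weights minus_three min tight
      by (simp add: min_cost_tree_Node_commute tight_Node_commute)
    then show ?thesis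
      using Node.IH(2) 3 ones min_cost_tree_right[OF min] tight_NodeD(2)[OF weights tight] by simp
  qed
qed simp

lemma abs_sum_mset_le:
  fixes f :: "'a \<Rightarrow> 'b::ordered_ab_group_add_abs"
  assumes "M \<subseteq># X"
  shows "\<bar>\<Sum>x\<in>#M. f x\<bar> \<le> (\<Sum>x\<in>#X. \<bar>f x\<bar>)"
proof -
  have "\<bar>\<Sum>x\<in>#M. f x\<bar> \<le> (\<Sum>x\<in>#M. \<bar>f x\<bar>)"
    by (induction M) (auto intro: order_trans[OF abs_triangle_ineq])
  also have "\<dots> \<le> (\<Sum>x\<in>#M. \<bar>f x\<bar>) + (\<Sum>x\<in>#X - M. \<bar>f x\<bar>)"
    by (simp add: sum_mset_mono[of "X - M" "\<lambda>_. 0", simplified])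
  also have "\<dots> = (\<Sum>x\<in>#X. \<bar>f x\<bar>)"
    using assms by (metis image_mset_union subset_mset.add_diff_inverse sum_mset.union)
  finally show ?thesis .
qed

definition deviation :: "(int \<Rightarrow> int) \<Rightarrow> int \<Rightarrow> int multiset \<Rightarrow> int" where
  "deviation w H X = (\<Sum>x\<in>#X. \<bar>3 * x - w x * H\<bar>)"

lemma deviation_nonneg: "0 \<le> deviation w H X"
  unfolding deviation_def by (induction X) auto

lemma aval_deviation_le:
  assumes "leaves t \<subseteq># X"
  shows "\<bar>3 * aval t - charge w t * H\<bar> \<le> deviation w H X"
proof -
  have "3 * aval t - charge w t * H = (\<Sum>x\<in>#leaves t. 3 * x - w x * H)"
    by (induction t) (auto simp: algebra_simps)
  then show ?thesis
    using abs_sum_mset_le[OF assms] by (simp add: deviation_def)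
qed

lemma cost_charge_cost_approx:
  assumes "0 \<le> H"
  shows "leaves t \<subseteq># X \<Longrightarrow>
    \<bar>3 * cost t - charge_cost w t * H\<bar> \<le> (int (size (leaves t)) - 1) * deviation w H X"
proof (induction t)
  case (Node l r)
  have "leaves l \<subseteq># X" "leaves r \<subseteq># X"
    using Node.prems by (auto intro: subset_mset.order_trans[OF mset_subset_eq_add_left]
                                     subset_mset.order_trans[OF mset_subset_eq_add_right])
  note IH = Node.IH(1)[OF this(1)] Node.IH(2)[OF this(2)]
  let ?v = "aval l + aval r" and ?c = "charge w l + charge w r"
  have "\<bar>\<bar>3 * ?v\<bar> - \<bar>?c * H\<bar>\<bar> \<le> \<bar>3 * ?v - ?c * H\<bar>"
    by (rule abs_triangle_ineq3)
  also have "\<dots> \<le> deviation w H X"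
    using aval_deviation_le[OF Node.prems] by simp
  finally have "\<bar>3 * \<bar>?v\<bar> - \<bar>?c\<bar> * H\<bar> \<le> deviation w H X"
    by (simp only: abs_mult abs_numeral abs_of_nonneg[OF assms])
  then show ?case using IH by (simp add: algebra_simps)
qed simp

lemma min_cost_charge_cost_le:
  assumes "0 < H" and min: "min_cost_tree X T" and T': "leaves T' = X"
    and small: "2 * int (size X) * deviation w H X < H"
  shows "charge_cost w T \<le> charge_cost w T'"
proof -
  define D where "D = deviation w H X"
  have T: "leaves T = X" and "cost T \<le> cost T'"
    using min T' unfolding min_cost_tree_def addition_tree_over_def by auto
  moreover have "\<bar>3 * cost T - charge_cost w T * H\<bar> \<le> (int (size X) - 1) * D"
    "\<bar>3 * cost T' - charge_cost w T' * H\<bar> \<le> (int (size X) - 1) * D"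
    using cost_charge_cost_approx[of H T X w] cost_charge_cost_approx[of H T' X w] \<open>0 < H\<close> T T'
    unfolding D_def by simp_all
  ultimately have "charge_cost w T * H \<le> charge_cost w T' * H + 2 * (int (size X) - 1) * D"
    by linarith
  also have "\<dots> < (charge_cost w T' + 1) * H"
    using small deviation_nonneg[of w H X] unfolding D_def by (simp add: algebra_simps)
  finally show ?thesis
    using \<open>0 < H\<close> by (simp add: mult_less_cancel_right)
qed

lemma min_cost_tree_tight:
  assumes weights: "\<And>x. w x \<in> {1, -3, 0}" and "0 < H"
    and min: "min_cost_tree X T" and T': "leaves T' = X"
    and T'_cost: "2 * charge_cost w T' = (\<Sum>x\<in>#X. \<bar>w x\<bar>)"
    and neutral: "(\<Sum>x\<in>#X. w x) = 0"
    and small: "2 * int (size X) * deviation w H X < H"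
  shows "tight w T"
proof -
  have T: "leaves T = X"
    using min unfolding min_cost_tree_def addition_tree_over_def by simp
  then have "charge w T = 0"
    using neutral by (simp add: charge_def)
  then have "deficit w T = 0"
    by (cases T) auto
  then have "potential w T = (\<Sum>x\<in>#X. \<bar>w x\<bar>)"
    using T \<open>charge w T = 0\<close> by (simp add: potential_def)
  then show ?thesis
    using potential_le_charge_cost[of w T, OF weights] T'_cost
      min_cost_charge_cost_le[OF \<open>0 < H\<close> min T' small]
    unfolding tight_def by linarith
qed

lemma is_lambda_sum_mset:
  assumes "size M \<le> 5 * m" and "\<forall>x\<in>#M. f x = 0 \<or> (\<exists>i\<le>3*m. f x = beta i)"
  shows "is_lambda m beta (\<Sum>x\<in>#M. f x)"
proof -
  have "\<exists>ts. length ts \<le> size M \<and> (\<forall>(s, i)\<in>set ts. s = 1 \<and> i \<le> 3*m) \<and>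
      (\<Sum>x\<in>#M. f x) = (\<Sum>(s, i)\<leftarrow>ts. s * beta i)"
    using assms(2)
  proof (induction M)
    case (add x M)
    then obtain ts where ts: "length ts \<le> size M" "\<forall>(s, i)\<in>set ts. s = 1 \<and> i \<le> 3*m"
      "(\<Sum>x\<in>#M. f x) = (\<Sum>(s, i)\<leftarrow>ts. s * beta i)" by auto
    from add.prems consider "f x = 0" | i where "i \<le> 3*m" "f x = beta i" by auto
    then show ?case
    proof cases
      case 1
      then show ?thesis using ts by (intro exI[of _ ts]) simp
    next
      case 2
      then show ?thesis using ts by (intro exI[of _ "(1, i) # ts"]) simp
    qed
  qed simp
  then obtain ts where "length ts \<le> size M" and ts: "\<forall>(s, i)\<in>set ts. s = 1 \<and> i \<le> 3*m"
    and sum: "(\<Sum>x\<in>#M. f x) = (\<Sum>(s, i)\<leftarrow>ts. s * beta i)" by blast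
  have "length ts \<le> 5 * m" using \<open>length ts \<le> size M\<close> assms(1) by linarith
  moreover have "\<forall>(s, i)\<in>set ts. (s = 1 \<or> s = -1) \<and> i \<le> 3*m"
    using ts by auto
  ultimately show ?thesis
    unfolding is_lambda_def using sum by blast
qed

lemma aval_eq_charge_plus_offsets:
  fixes H :: int
  assumes "H \<noteq> 0"
  shows "real_of_int (aval t) = (real_of_int (charge w t) / 3
    + (\<Sum>x\<in>#leaves t. real_of_int x / real_of_int H - real_of_int (w x) / 3)) * real_of_int H"
  using assms by (induction t) (auto simp: field_simps)

locale reduction_instance =
  fixes m :: nat and a :: "nat \<Rightarrow> int" and H h \<delta> :: int
  assumes m_pos: "0 < m" and h_nonneg: "0 \<le> h" and h_small: "3 * h \<le> \<delta>"
    and H_large: "50 * int m ^ 2 * \<delta> < H"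
    and items: "\<And>i. i \<in> {1..3*m} \<Longrightarrow>
      0 < a i \<and> h < a i \<and> 3 * a i < H \<and> \<bar>3 * a i - H\<bar> \<le> \<delta>"
begin

definition X :: "int multiset" where
  "X = image_mset a (mset [1..<3*m+1]) + replicate_mset m (-H) + replicate_mset m h"

definition thirds :: "int \<Rightarrow> int" where
  "thirds x = (if x = -H then -3 else if x = h then 0 else 1)"

definition beta :: "nat \<Rightarrow> real" where
  "beta i = (if i = 0 then real_of_int h / real_of_int H else real_of_int (a i) / real_of_int H - 1/3)"

lemma H_pos: "0 < H"
proof -
  have "0 \<le> 50 * int m ^ 2 * \<delta>" using h_nonneg h_small by simp
  then show ?thesis using H_large by linarith
qed

lemma thirds_values: "thirds x \<in> {1, -3, 0}"
  by (simp add: thirds_def)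

lemma thirds_eq_minus_three: "thirds x = -3 \<Longrightarrow> x = -H"
  by (simp add: thirds_def split: if_splits)

lemma thirds_items: "i \<in> {1..3*m} \<Longrightarrow> thirds (a i) = 1"
  using items[of i] H_pos h_nonneg by (auto simp: thirds_def)

lemma thirds_minus_H: "thirds (-H) = -3" and thirds_h: "thirds h = 0"
  using H_pos h_nonneg by (auto simp: thirds_def)

lemma X_cases:
  assumes "x \<in># X"
  obtains i where "i \<in> {1..3*m}" "x = a i" | "x = -H" | "x = h"
proof -
  have "x \<in> a ` {1..<3*m+1} \<or> x = -H \<or> x = h"
    using assms by (auto simp: X_def split: if_splits)
  then show ?thesis using that by force
qed

lemma size_X: "size X = 5 * m"
  by (simp add: X_def)

lemma thirds_items_mset:
  "image_mset thirds (image_mset a (mset [1..<3*m+1])) = replicate_mset (3*m) 1"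
proof -
  have "image_mset thirds (image_mset a (mset [1..<3*m+1])) =
      image_mset (\<lambda>_. 1) (mset [1..<3*m+1])"
    unfolding image_mset.compositionality by (rule image_mset_cong) (use thirds_items in auto)
  then show ?thesis by (simp only: image_mset_const_eq size_mset length_upt) simp
qed

lemma thirds_sum_X: "(\<Sum>x\<in>#X. thirds x) = 0"
  unfolding X_def image_mset_union thirds_items_mset by (simp add: thirds_minus_H thirds_h)

lemma thirds_abs_sum_X: "(\<Sum>x\<in>#X. \<bar>thirds x\<bar>) = 6 * int m"
proof -
  have "(\<Sum>x\<in>#X. \<bar>thirds x\<bar>) = (\<Sum>y\<in>#image_mset thirds X. \<bar>y\<bar>)"
    by (simp add: image_mset.compositionality comp_def)
  also have "\<dots> = 6 * int m"
    unfolding X_def image_mset_union thirds_items_mset by (simp add: thirds_minus_H thirds_h)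
  finally show ?thesis .
qed

lemma grouped_tree_exists:
  obtains T0 where "leaves T0 = X" "2 * charge_cost thirds T0 = 6 * int m"
proof -
  define group where "group k =
    Node (Node (Node (Node (Leaf (a (3*k+1))) (Leaf (a (3*k+2)))) (Leaf (-H))) (Leaf (a (3*k+3)))) (Leaf h)"
    for k
  define prefix where "prefix k =
    image_mset a (mset [1..<3*k+1]) + replicate_mset k (-H) + replicate_mset k h" for k
  have group: "charge thirds (group k) = 0 \<and> charge_cost thirds (group k) = 3" if "k < m" for k
    using that thirds_items[of "3*k+1"] thirds_items[of "3*k+2"] thirds_items[of "3*k+3"]
    by (simp add: group_def thirds_minus_H thirds_h)
  have prefix_Suc: "prefix (Suc k) = prefix k + leaves (group k)" for k
  proof -
    have "[1..<3 * Suc k + 1] = [1..<3*k+1] @ [3*k+1..<(3*k+1) + 3]"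
      using upt_add_eq_append[of 1 "3*k+1" 3] by simp
    also have "[3*k+1..<(3*k+1) + 3] = [3*k+1, 3*k+2, 3*k+3]"
      by (simp add: upt_rec)
    finally show ?thesis
      by (simp add: prefix_def group_def add_mset_commute)
  qed
  have "\<exists>t. leaves t = prefix (Suc k) \<and> charge thirds t = 0 \<and>
      charge_cost thirds t = 3 * int (Suc k)"
    if "Suc k \<le> m" for k
    using that
  proof (induction k)
    case 0
    then show ?case
      using group[of 0] prefix_Suc[of 0] by (intro exI[of _ "group 0"]) (simp add: prefix_def)
  next
    case (Suc k)
    then obtain t where "leaves t = prefix (Suc k)" "charge thirds t = 0"
      "charge_cost thirds t = 3 * int (Suc k)"
      by auto
    then show ?case
      using group[of "Suc k"] prefix_Suc[of "Suc k"] Suc.prems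
      by (intro exI[of _ "Node t (group (Suc k))"]) simp
  qed
  from this[of "m - 1"] obtain t where "leaves t = prefix m" "charge_cost thirds t = 3 * int m"
    using m_pos by auto
  moreover have "X = prefix m"
    by (simp add: X_def prefix_def)
  ultimately show thesis
    using that by simp
qed

lemma deviation_X_le: "deviation thirds H X \<le> 5 * int m * \<delta>"
proof -
  have "\<bar>3 * x - thirds x * H\<bar> \<le> \<delta>" if "x \<in># X" for x
    using that
  proof (cases rule: X_cases)
    case (1 i)
    then show ?thesis using items[of i] thirds_items[of i] by (auto simp: abs_le_iff)
  qed (use thirds_minus_H thirds_h h_small h_nonneg in auto)
  then have "deviation thirds H X \<le> (\<Sum>x\<in>#X. \<delta>)"
    unfolding deviation_def by (rule sum_mset_mono)
  then show ?thesis
    by (simp add: size_X)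
qed

lemma deviation_X_small: "2 * int (size X) * deviation thirds H X < H"
proof -
  have "2 * int (size X) * deviation thirds H X = (10 * int m) * deviation thirds H X"
    by (simp add: size_X)
  also have "\<dots> \<le> (10 * int m) * (5 * int m * \<delta>)"
    using deviation_X_le by (rule mult_left_mono) simp
  also have "\<dots> = 50 * int m ^ 2 * \<delta>"
    by (simp add: power2_eq_square)
  finally show ?thesis
    using H_large by linarith
qed

lemma deviation_X_lt_H: "deviation thirds H X < H"
proof -
  have "1 \<le> 2 * int (size X)"
    using m_pos by (simp add: size_X)
  then have "deviation thirds H X \<le> 2 * int (size X) * deviation thirds H X"
    using deviation_nonneg[of thirds H X] by (simp add: mult_le_cancel_right1)
  then show ?thesis
    using deviation_X_small by linarith
qed

lemma min_cost_inner_charge_ge: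
  assumes min: "min_cost_tree X T" and u: "u \<in> inner_nodes T"
  shows "-1 \<le> charge thirds u"
proof -
  obtain T0 where "leaves T0 = X" "2 * charge_cost thirds T0 = 6 * int m"
    by (rule grouped_tree_exists)
  then have "tight thirds T"
    using min_cost_tree_tight[OF thirds_values H_pos min] thirds_abs_sum_X thirds_sum_X
      deviation_X_small by simp
  moreover have T: "leaves T = X"
    using min by (simp add: min_cost_tree_def addition_tree_over_def)
  moreover have "\<forall>x\<in>#X. thirds x = 1 \<longrightarrow> 0 < x \<and> 3 * x < H"
    using items thirds_minus_H thirds_h by (auto elim: X_cases)
  ultimately show ?thesis
    using tight_min_cost_inner_charge_ge[OF thirds_values thirds_eq_minus_three _ _ _ _ u] min
      thirds_sum_X by (simp add: charge_def)
qed

lemma negative_inner_charge_le: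
  assumes min: "min_cost_tree X T" and u: "u \<in> inner_nodes T" and neg: "aval u < 0"
  shows "charge thirds u \<le> 0"
proof (rule ccontr)
  assume "\<not> charge thirds u \<le> 0"
  then have "H \<le> charge thirds u * H"
    using H_pos by simp
  moreover have "leaves u \<subseteq># X"
    using leaves_inner_node_subset[OF u] min by (simp add: min_cost_tree_def addition_tree_over_def)
  then have "\<bar>3 * aval u - charge thirds u * H\<bar> < H"
    using aval_deviation_le deviation_X_lt_H by (meson order.strict_trans1)
  ultimately show False
    using neg by linarith
qed

lemma is_lambda_offset_sum:
  assumes "M \<subseteq># X"
  shows "is_lambda m beta
    (\<Sum>x\<in>#M. real_of_int x / real_of_int H - real_of_int (thirds x) / 3)"
proof (rule is_lambda_sum_mset)
  show "size M \<le> 5 * m"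
    using size_mset_mono[OF assms] by (simp add: size_X)
  show "\<forall>x\<in>#M. real_of_int x / real_of_int H - real_of_int (thirds x) / 3 = 0 \<or>
      (\<exists>i\<le>3*m. real_of_int x / real_of_int H - real_of_int (thirds x) / 3 = beta i)"
  proof
    fix x assume "x \<in># M"
    then have "x \<in># X" by (rule mset_subset_eqD[OF assms])
    then show "real_of_int x / real_of_int H - real_of_int (thirds x) / 3 = 0 \<or>
      (\<exists>i\<le>3*m. real_of_int x / real_of_int H - real_of_int (thirds x) / 3 = beta i)"
    proof (cases rule: X_cases)
      case (1 i)
      then show ?thesis using thirds_items[of i] by (intro disjI2 exI[of _ i]) (simp add: beta_def)
    next
      case 2
      then show ?thesis using thirds_minus_H H_pos by simp
    next
      case 3
      then show ?thesis using thirds_h by (auto simp: beta_def)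
    qed
  qed
qed

theorem negative_node_form:
  assumes min: "min_cost_tree X T" and z: "z \<in> internal_vals T" "z < 0"
  shows "\<exists>lam. is_lambda m beta lam \<and>
    (real_of_int z = lam * real_of_int H \<or> real_of_int z = (-1/3 + lam) * real_of_int H)"
proof -
  obtain u where u: "u \<in> inner_nodes T" and z_u: "z = aval u"
    using z(1) by (auto simp: internal_vals_eq_aval_image)
  define lam where "lam =
    (\<Sum>x\<in>#leaves u. real_of_int x / real_of_int H - real_of_int (thirds x) / 3)"
  have "is_lambda m beta lam"
    unfolding lam_def using is_lambda_offset_sum leaves_inner_node_subset[OF u] min
    by (simp add: min_cost_tree_def addition_tree_over_def)
  moreover have "real_of_int z = (real_of_int (charge thirds u) / 3 + lam) * real_of_int H"
    unfolding z_u lam_def using aval_eq_charge_plus_offsets H_pos by simp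
  moreover have "charge thirds u = 0 \<or> charge thirds u = -1"
    using min_cost_inner_charge_ge[OF min u] negative_inner_charge_le[OF min u] z z_u by linarith
  ultimately show ?thesis
    by auto
qed

end

lemma padding_bounds:
  fixes m K :: nat
  assumes "0 < m"
  defines "h \<equiv> \<lfloor>4 * (1 / (400 * (5 * real m)^2)) *
    real_of_int (3 * (100 * (5 * int m)^2 * int K) + int K)\<rfloor>"
  shows "3 * int K \<le> h \<and> h \<le> 4 * int K"
proof -
  define v where "v = 4 * (1 / (400 * (5 * real m)^2)) *
    real_of_int (3 * (100 * (5 * int m)^2 * int K) + int K)"
  have "1 \<le> real m"
    using assms(1) by simp
  then have "1 \<le> 2500 * real m ^ 2"
    using one_le_power[of "real m" 2] by linarith
  then have "0 \<le> real K / (2500 * real m ^ 2) \<and> real K / (2500 * real m ^ 2) \<le> real K"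
    by (simp add: divide_le_eq mult_le_cancel_left1)
  moreover have "v = 3 * real K + real K / (2500 * real m ^ 2)"
    unfolding v_def using assms(1) by (simp add: field_simps power2_eq_square)
  ultimately have "real_of_int (3 * int K) \<le> v" and "v < real_of_int (4 * int K) + 1"
    by simp_all
  then show ?thesis
    unfolding h_def v_def[symmetric] by (simp only: le_floor_iff floor_le_iff)
qed

lemma reduction_instance_from_partition:
  fixes m K :: nat and b :: "nat \<Rightarrow> int" and W h H :: int
  assumes m_pos: "0 < m" and K_pos: "0 < K"
    and b: "\<forall>i\<in>{1..3*m}. 0 < b i \<and> real_of_int (b i) < real K / 2"
  defines "W \<equiv> 100 * (5 * int m)^2 * int K"
    and "h \<equiv> \<lfloor>4 * (1 / (400 * (5 * real m)^2)) * real_of_int (3 * W + int K)\<rfloor>"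
    and "H \<equiv> 3 * W + int K + h"
  shows "reduction_instance m (\<lambda>i. b i + W) H h (13 * int K)"
proof -
  have h: "3 * int K \<le> h" "h \<le> 4 * int K"
    unfolding h_def W_def using padding_bounds[OF m_pos] by simp_all
  define M where "M = int m ^ 2 * int K"
  have K_le_M: "int K \<le> M"
    using m_pos by (simp add: M_def mult_le_cancel_right1)
  have M: "W = 2500 * M" "H = 7500 * M + int K + h" "50 * int m ^ 2 * (13 * int K) = 650 * M"
    by (simp_all add: M_def W_def H_def power2_eq_square)
  have "0 < b i + W \<and> h < b i + W \<and> 3 * (b i + W) < H \<and>
      \<bar>3 * (b i + W) - H\<bar> \<le> 13 * int K"
    if "i \<in> {1..3*m}" for i
  proof -
    have "0 < b i" "real_of_int (b i) < real K / 2"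
      using b that by auto
    then have "0 < b i" "2 * b i < int K"
      by linarith+
    then show ?thesis
      using h K_le_M M K_pos unfolding abs_le_iff distrib_left by (intro conjI) linarith+
  qed
  then show ?thesis
    using m_pos h K_pos K_le_M M by unfold_locales auto
qed

theorem lemma2p9:
  fixes m K :: nat and b :: "nat \<Rightarrow> int" and T :: atree and z :: int
    and W L h H :: int and a :: "nat \<Rightarrow> int" and eps :: real
    and beta :: "nat \<Rightarrow> real" and X :: "int multiset"
  assumes m_pos: "m > 0" and K_pos: "K > 0"
    and b_pos: "\<forall>i\<in>{1..3*m}. b i > 0"
    and b_bounds: "\<forall>i\<in>{1..3*m}. real K / 4 < real_of_int (b i) \<and> real_of_int (b i) < real K / 2"
    and b_sum: "(\<Sum>i=1..3*m. b i) = int (m * K)"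
  defines "W \<equiv> 100 * (5 * int m)^2 * int K"
    and "a \<equiv> (\<lambda>i. b i + W)"
    and "L \<equiv> 3 * W + int K"
    and "eps \<equiv> 1 / (400 * (5 * real m)^2)"
    and "h \<equiv> \<lfloor>4 * eps * real_of_int L\<rfloor>"
    and "H \<equiv> L + h"
    and "beta \<equiv> (\<lambda>i. if i = 0 then real_of_int h / real_of_int H
                     else real_of_int (a i) / real_of_int H - 1/3)"
    and "X \<equiv> image_mset a (mset [1..<3*m+1]) + replicate_mset m (- H) + replicate_mset m h"
  assumes Tmin: "min_cost_tree X T"
    and z_node: "z \<in> internal_vals T" and z_neg: "z < 0"
  shows "\<exists>lam. is_lambda m beta lam \<and>
           (real_of_int z = lam * real_of_int H \<or> real_of_int z = (-1/3 + lam) * real_of_int H)"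
proof -
  have "\<forall>i\<in>{1..3*m}. 0 < b i \<and> real_of_int (b i) < real K / 2"
    using b_pos b_bounds by blast
  then interpret I: reduction_instance m a H h "13 * int K"
    unfolding a_def H_def L_def h_def eps_def W_def
    by (rule reduction_instance_from_partition[OF m_pos K_pos])
  have "I.X = X"
    unfolding X_def I.X_def ..
  moreover have "I.beta = beta"
    unfolding beta_def by (rule ext) (simp add: I.beta_def)
  ultimately show ?thesis
    using I.negative_node_form Tmin z_node z_neg by metis
qed

end
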